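(* Consider the scaled pure-scattering transport equation $$\frac{\partial I}{\partial t}+\frac{c}{\varepsilon}\vec\Omega\cdot\nabla I=\frac{c\sigma_s}{\varepsilon^2}(S-I),\qquad S(\vec\Omega)=\int_{S^2}p(\vec\Omega'\to\vec\Omega)I(\vec\Omega')\,d\vec\Omega',$$ with normalized phase function $p(\vec\Omega'\to\vec\Omega)=\sum_{l=0}^{L}C_l^\ast(\vec\Omega'\cdot\vec\Omega)^l$, $\int_{S^2}p\,d\vec\Omega'=1$, in the optically thick regime where $I=S-\varepsilon\sigma_s^{-1}\vec\Omega\cdot\nabla S+O(\varepsilon^2)$, so that to first order in $\varepsilon$ the angular moments satisfy $J^{(m)}=S^{(m)}$ for even $m$ and $J^{(n)}=S^{(n)}-\varepsilon\sigma_s^{-1}\nabla\cdot J^{(n+1)}$ for odd $n$. Here, for $(i_1,\dots,i_l)\in\{x,y,z\}^l$, $J^{(l)}_{i_1\cdots i_l}=\int\Omega_{i_1}\cdots\Omega_{i_l}I\,d\vec\Omega$ and $S^{(l)}_{i_1\cdots i_l}=\int\Omega_{i_1}\cdots\Omega_{i_l}S\,d\vec\Omega$ with $(\Omega_x,\Omega_y,\Omega_z)=(\mu,\xi,\zeta)$. Then for every odd $l$ and every tuple $(i_1,\dots,i_l)$, writing $\Omega^{(l)}_{i_1\cdots i_l}=\Omega_{i_1}\cdots\Omega_{i_l}$ and $\langle f\rangle=\int_{S^2}f\,d\vec\Omega$: (i) if the index $x$ occurs an odd number of times and $y,z$ each an even number of times, then $J^{(l)}_{i_1\cdots i_l}=\frac{\langle\mu\,\Omega^{(l)}_{i_1\cdots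 i_l}\rangle}{\langle\mu^2\rangle}J^{(1)}_x$; (ii) if $y$ occurs an odd number of times and $x,z$ each an even number of times, then $J^{(l)}_{i_1\cdots i_l}=\frac{\langle\xi\,\Omega^{(l)}_{i_1\cdots i_l}\rangle}{\langle\mu^2\rangle}J^{(1)}_y$; (iii) if $z$ occurs an odd number of times and $x,y$ each an even number of times, then $J^{(l)}_{i_1\cdots i_l}=\frac{\langle\zeta\,\Omega^{(l)}_{i_1\cdots i_l}\rangle}{\langle\mu^2\rangle}J^{(1)}_z$; (iv) if each of $x,y,z$ occurs an odd number of times, then $J^{(l)}_{i_1\cdots i_l}=0$.
   Context: $I(t,\vec x,\vec\Omega)$ is the radiation intensity, $c$ the speed of light, $\sigma_s$ the scattering coefficient, $\varepsilon$ the Knudsen number (ratio of mean free path to characteristic length), $\vec\Omega=(\mu,\xi,\zeta)$ a unit direction vector, and $d\vec\Omega$ surface measure on the unit sphere. The statements are understood to first order in $\varepsilon$ in the asymptotic expansion. *)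

theory Defs
  imports "HOL-Analysis.Analysis"
begin

text \<open>Unit direction vector in spherical coordinates (theta polar, phi azimuthal);
  components 1,2,3 are x,y,z, i.e. (mu, xi, zeta).\<close>
definition sph_dir :: "real \<Rightarrow> real \<Rightarrow> real^3" where
  "sph_dir \<theta> \<phi> = vector [sin \<theta> * cos \<phi>, sin \<theta> * sin \<phi>, cos \<theta>]"

definition sph_int :: "(real^3 \<Rightarrow> real) \<Rightarrow> real" where
  "sph_int f = integral ({0..pi} \<times> {0..2*pi}) (\<lambda>(\<theta>,\<phi>). f (sph_dir \<theta> \<phi>) * sin \<theta>)"

definition Omega_prod :: "3 list \<Rightarrow> real^3 \<Rightarrow> real" where
  "Omega_prod idx \<Omega> = prod_list (map (\<lambda>i. \<Omega> $ i) idx)"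

definition moment :: "3 list \<Rightarrow> (real^3 \<Rightarrow> real) \<Rightarrow> real" where
  "moment idx f = sph_int (\<lambda>\<Omega>. Omega_prod idx \<Omega> * f \<Omega>)"

definition phase :: "(nat \<Rightarrow> real) \<Rightarrow> nat \<Rightarrow> real^3 \<Rightarrow> real^3 \<Rightarrow> real" where
  "phase C L \<Omega>' \<Omega> = (\<Sum>l\<le>L. C l * (\<Omega>' \<bullet> \<Omega>) ^ l)"

definition source :: "(nat \<Rightarrow> real) \<Rightarrow> nat \<Rightarrow> (real^3 \<Rightarrow> real) \<Rightarrow> real^3 \<Rightarrow> real" where
  "source C L f \<Omega> = sph_int (\<lambda>\<Omega>'. phase C L \<Omega>' \<Omega> * f \<Omega>')"

end

theory Submission
  imports Defs "HOL-Computational_Algebra.Polynomial"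
begin

text \<open>
  The first-order intensity is an affine function of the direction. At zeroth order I0 is a
  fixed point of the scattering operator S, which averages against a nonnegative kernel; since
  the kernel is a nonzero polynomial in the cosine of the scattering angle it cannot vanish on
  an open set of directions, so a maximum principle makes every continuous fixed point constant.
  Hence S I0 is isotropic, its spatial derivative is a linear function of the direction,
  and I1 solves I1 = S I1 + Omega.b. Rotation invariance of the sphere integral shows that S
  multiplies Omega.b by the mean scattering cosine g, and g = 1 is excluded because zeta would
  then be a nonconstant fixed point; so I1 = a + Omega.b / (1 - g). The moments of an affine
  function of the direction are combinations of the monomial integrals of mu^a xi^b zeta^c,
  which vanish when an exponent is odd and satisfy <mu^2> = <xi^2> = <zeta^2>.
\<close>

section \<open>Spherical coordinates and the sphere integral\<close>

lemma sph_dir_nth [simp]: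
  "sph_dir t p $ 1 = sin t * cos p" "sph_dir t p $ 2 = sin t * sin p" "sph_dir t p $ 3 = cos t"
  by (simp_all add: sph_dir_def)

lemma vec3_eq_iff: "(v::real^3) = w \<longleftrightarrow> v$1 = w$1 \<and> v$2 = w$2 \<and> v$3 = w$3"
  by (simp add: vec_eq_iff forall_3)

lemma inner_real3: "(v::real^3) \<bullet> w = v$1 * w$1 + v$2 * w$2 + v$3 * w$3"
  by (simp add: inner_vec_def sum_3)

lemma norm_real3: "norm (v::real^3) = sqrt (v$1^2 + v$2^2 + v$3^2)"
  by (simp add: norm_eq_sqrt_inner inner_real3 power2_eq_square)

lemma norm_sph_dir [simp]: "norm (sph_dir t p) = 1"
proof -
  have "sin t^2 * (cos p^2 + sin p^2) + cos t^2 = 1"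
    by simp
  then have "(sin t * cos p)^2 + (sin t * sin p)^2 + (cos t)^2 = 1"
    by (simp only: power_mult_distrib distrib_left)
  then show ?thesis
    by (simp add: norm_real3)
qed

lemma continuous_on_sph_dir [continuous_intros]:
  fixes g h :: "'a::t2_space \<Rightarrow> real"
  assumes "continuous_on S g" "continuous_on S h"
  shows "continuous_on S (\<lambda>x. sph_dir (g x) (h x))"
proof -
  have eq: "(\<lambda>x. sph_dir (g x) (h x)) = (\<lambda>x. (sin (g x) * cos (h x)) *\<^sub>R axis 1 1
          + (sin (g x) * sin (h x)) *\<^sub>R axis 2 1 + cos (g x) *\<^sub>R axis 3 1)"
    by (simp add: fun_eq_iff vec3_eq_iff axis_def)
  show ?thesis
    unfolding eq
    by (intro continuous_intros assms)
qed

lemma continuous_on_compose_sph_dir: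
  fixes g h :: "'a::t2_space \<Rightarrow> real"
  assumes "continuous_on (sphere 0 1) f" "continuous_on S g" "continuous_on S h"
  shows "continuous_on S (\<lambda>x. f (sph_dir (g x) (h x)))"
  by (rule continuous_on_compose2[OF assms(1) continuous_on_sph_dir[OF assms(2,3)]]) auto

lemma sph_dir_surj:
  assumes "v \<in> sphere (0::real^3) 1"
  obtains t p where "0 \<le> t" "t \<le> pi" "0 \<le> p" "p \<le> 2*pi" "v = sph_dir t p"
proof -
  have n: "v$1^2 + v$2^2 + v$3^2 = 1"
    using assms by (simp add: norm_real3)
  then have "v$3^2 \<le> 1"
    by (metis add_increasing2 zero_le_power2 le_add_same_cancel2 order_refl)
  then have z: "\<bar>v$3\<bar> \<le> 1"
    by (simp add: abs_square_le_1)
  define t where "t = arccos (v$3)"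
  have t: "cos t = v$3" "0 \<le> t" "t \<le> pi"
    using z by (auto simp: t_def arccos_lbound arccos_ubound)
  have sin_t: "sin t ^ 2 = v$1^2 + v$2^2"
    using z n by (simp add: t_def sin_arccos abs_square_le_1)
  show ?thesis
  proof (cases "sin t = 0")
    case True
    then have "v$1^2 + v$2^2 = 0"
      using sin_t by simp
    then have "v$1 = 0" "v$2 = 0"
      by (auto simp: add_nonneg_eq_0_iff)
    then show ?thesis
      using that[of t 0] t True by (simp add: vec3_eq_iff)
  next
    case False
    have "(v$1 / sin t)^2 + (v$2 / sin t)^2 = (v$1^2 + v$2^2) / sin t ^ 2"
      by (simp add: power_divide add_divide_distrib)
    also have "\<dots> = 1"
      using False by (simp flip: sin_t)
    finally have "(v$1 / sin t)^2 + (v$2 / sin t)^2 = 1" .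
    then obtain p where p: "0 \<le> p" "p < 2*pi" "v$1 / sin t = cos p" "v$2 / sin t = sin p"
      using sincos_total_2pi by blast
    then have "v = sph_dir t p"
      using False t by (simp add: vec3_eq_iff field_simps)
    then show ?thesis
      using that[of t p] t p by simp
  qed
qed

abbreviation angle_box :: "(real \<times> real) set" where
  "angle_box \<equiv> cbox (0, 0) (pi, 2 * pi)"

lemma sph_int_angle_box:
  "sph_int f = integral angle_box (\<lambda>x. f (sph_dir (fst x) (snd x)) * sin (fst x))"
  by (simp add: sph_int_def cbox_Pair_eq case_prod_beta')

lemma continuous_on_sph_integrand:
  "continuous_on (sphere 0 1) f \<Longrightarrow> continuous_on S (\<lambda>x. f (sph_dir (fst x) (snd x)) * sin (fst x))"
  by (intro continuous_intros continuous_on_compose_sph_dir)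

lemma sph_integrand_integrable:
  "continuous_on (sphere 0 1) f \<Longrightarrow> (\<lambda>x. f (sph_dir (fst x) (snd x)) * sin (fst x)) integrable_on angle_box"
  by (intro integrable_continuous continuous_on_sph_integrand)

lemma sph_int_cong: "(\<And>x. x \<in> sphere 0 1 \<Longrightarrow> f x = g x) \<Longrightarrow> sph_int f = sph_int g"
  by (simp add: sph_int_angle_box)

lemma sph_int_cmult: "sph_int (\<lambda>x. c * f x) = c * sph_int f"
  by (simp add: sph_int_angle_box mult.assoc)

lemma sph_int_add:
  "continuous_on (sphere 0 1) f \<Longrightarrow> continuous_on (sphere 0 1) g \<Longrightarrow>
   sph_int (\<lambda>x. f x + g x) = sph_int f + sph_int g"
  unfolding sph_int_angle_box distrib_right
  by (intro integral_add sph_integrand_integrable)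

lemma sph_int_diff:
  "continuous_on (sphere 0 1) f \<Longrightarrow> continuous_on (sphere 0 1) g \<Longrightarrow>
   sph_int (\<lambda>x. f x - g x) = sph_int f - sph_int g"
  unfolding sph_int_angle_box left_diff_distrib
  by (intro integral_diff sph_integrand_integrable)

lemma sph_int_sum:
  "finite S \<Longrightarrow> (\<And>i. i \<in> S \<Longrightarrow> continuous_on (sphere 0 1) (f i)) \<Longrightarrow>
   sph_int (\<lambda>x. \<Sum>i\<in>S. f i x) = (\<Sum>i\<in>S. sph_int (f i))"
  unfolding sph_int_angle_box sum_distrib_right
  by (intro integral_sum) (auto intro: sph_integrand_integrable)

section \<open>Monomial integrals over the sphere\<close>

definition sin_cos_integral :: "real \<Rightarrow> real \<Rightarrow> nat \<Rightarrow> nat \<Rightarrow> real" where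
  "sin_cos_integral s t n c = integral {s..t} (\<lambda>x. sin x ^ n * cos x ^ c)"

lemma integral_eq_0_of_antiderivative:
  assumes "s \<le> t" "\<And>x. (g has_real_derivative g' x) (at x)" "g s = g t"
  shows "integral {s..t} g' = 0"
proof -
  have "(g' has_integral (g t - g s)) {s..t}"
    using assms(1,2)
    by (intro fundamental_theorem_of_calculus)
       (auto intro: has_field_derivative_at_within simp flip: has_real_derivative_iff_has_vector_derivative)
  then show ?thesis
    using assms(3) by (simp add: integral_unique)
qed

lemma sin_cos_integrable: "(\<lambda>x::real. sin x ^ n * cos x ^ c) integrable_on {s..t}"
  by (intro integrable_continuous_interval continuous_intros)

lemma sin_cos_integral_split:
  "sin_cos_integral s t n c = sin_cos_integral s t (n+2) c + sin_cos_integral s t n (c+2)"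
proof -
  have "sin_cos_integral s t (n+2) c + sin_cos_integral s t n (c+2)
      = integral {s..t} (\<lambda>x. sin x ^ (n+2) * cos x ^ c + sin x ^ n * cos x ^ (c+2))"
    unfolding sin_cos_integral_def by (rule integral_add[OF sin_cos_integrable sin_cos_integrable, symmetric])
  also have "\<dots> = sin_cos_integral s t n c"
    unfolding sin_cos_integral_def
  proof (rule integral_cong)
    fix x :: real
    have "sin x ^ (n+2) * cos x ^ c + sin x ^ n * cos x ^ (c+2)
        = sin x ^ n * cos x ^ c * (sin x ^ 2 + cos x ^ 2)"
      by (simp only: power_add distrib_left) (simp only: mult_ac)
    then show "sin x ^ (n+2) * cos x ^ c + sin x ^ n * cos x ^ (c+2) = sin x ^ n * cos x ^ c"
      by (simp only: sin_cos_squared_add mult_1_right)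
  qed
  finally show ?thesis
    by simp
qed

lemma sin_cos_integral_parts:
  assumes "s \<le> t" "sin s = 0" "sin t = 0"
  shows "real (n+1) * sin_cos_integral s t n (c+2) = real (c+1) * sin_cos_integral s t (n+2) c"
proof -
  have "integral {s..t} (\<lambda>x. real (n+1) * (sin x ^ n * cos x ^ (c+2))
                              - real (c+1) * (sin x ^ (n+2) * cos x ^ c)) = 0"
    by (rule integral_eq_0_of_antiderivative[OF assms(1), where g = "\<lambda>x. sin x ^ (n+1) * cos x ^ (c+1)"])
       (rule derivative_eq_intros refl | simp add: assms)+
  moreover have "integral {s..t} (\<lambda>x. real (n+1) * (sin x ^ n * cos x ^ (c+2))
                              - real (c+1) * (sin x ^ (n+2) * cos x ^ c))
      = real (n+1) * sin_cos_integral s t n (c+2) - real (c+1) * sin_cos_integral s t (n+2) c"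
    unfolding sin_cos_integral_def
    by (subst integral_diff; (intro integrable_continuous_interval continuous_intros)?)
       (simp only: integral_mult_right)
  ultimately show ?thesis
    by simp
qed

lemma sin_cos_integral_rec_sin:
  assumes "s \<le> t" "sin s = 0" "sin t = 0"
  shows "real (n+c+2) * sin_cos_integral s t (n+2) c = real (n+1) * sin_cos_integral s t n c"
  using sin_cos_integral_parts[OF assms, of n c] sin_cos_integral_split[of s t n c]
  by (simp add: algebra_simps)

lemma sin_cos_integral_rec_cos:
  assumes "s \<le> t" "sin s = 0" "sin t = 0"
  shows "real (n+c+2) * sin_cos_integral s t n (c+2) = real (c+1) * sin_cos_integral s t n c"
  using sin_cos_integral_parts[OF assms, of n c] sin_cos_integral_split[of s t n c]
  by (simp add: algebra_simps)

lemma sin_cos_integral_odd_cos: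
  assumes "s \<le> t" "sin s = 0" "sin t = 0" "odd c"
  shows "sin_cos_integral s t n c = 0"
proof -
  have "sin_cos_integral s t n (2*k+1) = 0" for k
  proof (induction k)
    case 0
    have "integral {s..t} (\<lambda>x. real (n+1) * (sin x ^ n * cos x)) = 0"
      by (rule integral_eq_0_of_antiderivative[OF assms(1), where g = "\<lambda>x. sin x ^ (n+1)"])
         (rule derivative_eq_intros refl | simp add: assms)+
    then show ?case
      by (simp add: sin_cos_integral_def del: of_nat_Suc)
  next
    case (Suc k)
    have "real (n + (2*k+1) + 2) * sin_cos_integral s t n (2*k+1+2) = 0"
      using sin_cos_integral_rec_cos[OF assms(1-3), of n "2*k+1"] Suc.IH by simp
    then show ?case
      by (simp add: add.commute add.left_commute)
  qed
  then show ?thesis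
    using \<open>odd c\<close> by (metis oddE)
qed

lemma sin_cos_integral_odd_sin:
  assumes "odd n"
  shows "sin_cos_integral 0 (2*pi) n c = 0"
proof -
  have "sin_cos_integral 0 (2*pi) (2*k+1) c = 0" for k
  proof (induction k)
    case 0
    have "integral {0..2*pi} (\<lambda>x. - real (c+1) * (sin x * cos x ^ c)) = 0"
      by (rule integral_eq_0_of_antiderivative[where g = "\<lambda>x. cos x ^ (c+1)"])
         (rule derivative_eq_intros refl | simp add: algebra_simps)+
    then show ?case
      by (simp add: sin_cos_integral_def del: of_nat_Suc)
  next
    case (Suc k)
    have "real ((2*k+1) + c + 2) * sin_cos_integral 0 (2*pi) (2*k+1+2) c = 0"
      using sin_cos_integral_rec_sin[of 0 "2*pi" "2*k+1" c] Suc.IH by simp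
    then show ?case
      by (simp add: add.commute add.left_commute)
  qed
  then show ?thesis
    using \<open>odd n\<close> by (metis oddE)
qed

definition monomial3 :: "nat \<Rightarrow> nat \<Rightarrow> nat \<Rightarrow> real^3 \<Rightarrow> real" where
  "monomial3 a b c v = v$1^a * v$2^b * v$3^c"

definition monomial_integral :: "nat \<Rightarrow> nat \<Rightarrow> nat \<Rightarrow> real" where
  "monomial_integral a b c = sph_int (monomial3 a b c)"

lemma continuous_on_monomial3 [continuous_intros]: "continuous_on S (monomial3 a b c)"
  unfolding monomial3_def by (intro continuous_intros)

lemma Omega_prod_eq_monomial3:
  "Omega_prod idx = monomial3 (count_list idx 1) (count_list idx 2) (count_list idx 3)"
proof (induction idx)
  case Nil
  then show ?case
    by (simp add: fun_eq_iff Omega_prod_def monomial3_def)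
next
  case (Cons i idx)
  have "Omega_prod (i # idx) v = v$i * Omega_prod idx v" for v
    by (simp add: Omega_prod_def)
  then show ?case
    using Cons.IH exhaust_3[of i] by (auto simp: fun_eq_iff monomial3_def algebra_simps)
qed

lemma monomial_integral_sin_cos:
  "monomial_integral a b c = sin_cos_integral 0 (2*pi) b a * sin_cos_integral 0 pi (a+b+1) c"
proof -
  have "monomial_integral a b c = integral angle_box
          (\<lambda>x. (sin (fst x) ^ (a+b+1) * cos (fst x) ^ c) * (sin (snd x) ^ b * cos (snd x) ^ a))"
    unfolding monomial_integral_def sph_int_angle_box
    by (rule integral_cong) (simp add: monomial3_def power_mult_distrib power_add algebra_simps)
  also have "\<dots> = integral {0..pi} (\<lambda>u. integral {0..2*pi}
                    (\<lambda>v. (sin u ^ (a+b+1) * cos u ^ c) * (sin v ^ b * cos v ^ a)))"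
    by (subst integral_prod_continuous) (auto intro!: continuous_intros)
  also have "\<dots> = sin_cos_integral 0 (2*pi) b a * sin_cos_integral 0 pi (a+b+1) c"
    by (simp add: sin_cos_integral_def)
  finally show ?thesis .
qed

lemma monomial_integral_odd: "odd a \<or> odd b \<or> odd c \<Longrightarrow> monomial_integral a b c = 0"
  unfolding monomial_integral_sin_cos
  using sin_cos_integral_odd_sin sin_cos_integral_odd_cos[of 0 "2*pi"] sin_cos_integral_odd_cos[of 0 pi]
  by auto

lemma monomial_integral_rec_y:
  "real (a+b+c+3) * monomial_integral a (b+2) c = real (b+1) * monomial_integral a b c"
proof -
  have phi: "real (a+b+2) * sin_cos_integral 0 (2*pi) (b+2) a = real (b+1) * sin_cos_integral 0 (2*pi) b a"
    using sin_cos_integral_rec_sin[of 0 "2*pi" b a] by (simp add: add.commute)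
  have theta: "real (a+b+c+3) * sin_cos_integral 0 pi (a+b+3) c = real (a+b+2) * sin_cos_integral 0 pi (a+b+1) c"
    using sin_cos_integral_rec_sin[of 0 pi "a+b+1" c] by (simp add: eval_nat_numeral add.commute add.left_commute)
  have "real (a+b+2) * (real (a+b+c+3) * monomial_integral a (b+2) c)
      = (real (a+b+2) * sin_cos_integral 0 (2*pi) (b+2) a) * (real (a+b+c+3) * sin_cos_integral 0 pi (a+b+3) c)"
    by (simp add: monomial_integral_sin_cos eval_nat_numeral add.commute add.left_commute mult_ac)
  also have "\<dots> = real (a+b+2) * (real (b+1) * monomial_integral a b c)"
    unfolding phi theta monomial_integral_sin_cos by (simp only: mult_ac)
  finally show ?thesis
    by simp
qed

lemma monomial_integral_rec_z:
  "real (a+b+c+3) * monomial_integral a b (c+2) = real (c+1) * monomial_integral a b c"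
  using sin_cos_integral_rec_cos[of 0 pi "a+b+1" c]
  by (simp add: monomial_integral_sin_cos algebra_simps)

lemma monomial_integral_swap_yz: "monomial_integral a b c = monomial_integral a c b"
proof (induction "b + c" arbitrary: b c rule: less_induct)
  case less
  consider (b) b' where "b = b' + 2" | (c) c' where "c = c' + 2" | (small) "b < 2" "c < 2"
    by (metis add.commute le_Suc_ex not_less)
  then show ?case
  proof cases
    case b
    have "real (a+b'+c+3) * monomial_integral a b c = real (b'+1) * monomial_integral a b' c"
      using monomial_integral_rec_y[of a b' c] b by simp
    moreover have "real (a+b'+c+3) * monomial_integral a c b = real (b'+1) * monomial_integral a c b'"
      using monomial_integral_rec_z[of a c b'] b by (simp add: add.commute add.left_commute)
    moreover have "monomial_integral a b' c = monomial_integral a c b'"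
      using less b by simp
    ultimately show ?thesis
      by (metis mult_left_cancel of_nat_eq_0_iff add_eq_0_iff_both_eq_0 zero_neq_numeral)
  next
    case c
    have "real (a+b+c'+3) * monomial_integral a b c = real (c'+1) * monomial_integral a b c'"
      using monomial_integral_rec_z[of a b c'] c by simp
    moreover have "real (a+b+c'+3) * monomial_integral a c b = real (c'+1) * monomial_integral a c' b"
      using monomial_integral_rec_y[of a c' b] c by (simp add: add.commute add.left_commute)
    moreover have "monomial_integral a b c' = monomial_integral a c' b"
      using less c by simp
    ultimately show ?thesis
      by (metis mult_left_cancel of_nat_eq_0_iff add_eq_0_iff_both_eq_0 zero_neq_numeral)
  next
    case small
    then have "b = c \<or> odd b \<or> odd c"
      by presburger
    then show ?thesis
      by (auto simp: monomial_integral_odd)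
  qed
qed

lemma monomial_integral_square:
  "monomial_integral 2 0 0 = 4 * pi / 3"
  "monomial_integral 0 2 0 = 4 * pi / 3"
  "monomial_integral 0 0 2 = 4 * pi / 3"
proof -
  have "((\<lambda>x. sin x) has_integral (- cos pi - - cos 0)) {0..pi}"
    by (intro fundamental_theorem_of_calculus)
       (auto intro!: derivative_eq_intros simp flip: has_real_derivative_iff_has_vector_derivative)
  then have theta1: "sin_cos_integral 0 pi 1 0 = 2"
    by (simp add: sin_cos_integral_def integral_unique)
  have phi0: "sin_cos_integral 0 (2*pi) 0 0 = 2 * pi"
    by (simp add: sin_cos_integral_def)
  have phi_cos: "sin_cos_integral 0 (2*pi) 0 2 = pi"
    using sin_cos_integral_rec_cos[of 0 "2*pi" 0 0] phi0 by (simp add: numeral_2_eq_2)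
  have phi_sin: "sin_cos_integral 0 (2*pi) 2 0 = pi"
    using sin_cos_integral_rec_sin[of 0 "2*pi" 0 0] phi0 by (simp add: numeral_2_eq_2)
  have "3 * sin_cos_integral 0 pi 3 0 = 2 * sin_cos_integral 0 pi 1 0"
    using sin_cos_integral_rec_sin[of 0 pi 1 0] by (simp add: numeral_3_eq_3)
  then have theta3: "sin_cos_integral 0 pi 3 0 = 4 / 3"
    using theta1 by linarith
  show "monomial_integral 2 0 0 = 4 * pi / 3" "monomial_integral 0 2 0 = 4 * pi / 3"
    using theta3 by (simp_all add: monomial_integral_sin_cos phi_cos phi_sin numeral_3_eq_3)
  then show "monomial_integral 0 0 2 = 4 * pi / 3"
    by (simp add: monomial_integral_swap_yz[of 0 0 2])
qed

section \<open>Invariance of the sphere integral under rotations\<close>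

text \<open>
  Invariance under the swap of the y and z axes is derived from the symmetry of the monomial
  integrals, so it is only available for polynomial functions; isometries are therefore
  compared on that class.
\<close>

inductive poly_fun :: "(real^3 \<Rightarrow> real) \<Rightarrow> bool" where
  poly_fun_const: "poly_fun (\<lambda>x. c)"
| poly_fun_coord: "poly_fun (\<lambda>x. x$i)"
| poly_fun_add: "poly_fun f \<Longrightarrow> poly_fun g \<Longrightarrow> poly_fun (\<lambda>x. f x + g x)"
| poly_fun_mult: "poly_fun f \<Longrightarrow> poly_fun g \<Longrightarrow> poly_fun (\<lambda>x. f x * g x)"

lemma continuous_on_poly_fun: "poly_fun f \<Longrightarrow> continuous_on S f"
  by (induction rule: poly_fun.induct) (auto intro!: continuous_intros)

lemma poly_fun_compose:
  assumes "\<And>i. poly_fun (\<lambda>x. G x $ i)"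
  shows "poly_fun f \<Longrightarrow> poly_fun (\<lambda>x. f (G x))"
  by (induction rule: poly_fun.induct) (auto intro: poly_fun.intros assms)

lemma poly_fun_diff:
  assumes "poly_fun f" "poly_fun g"
  shows "poly_fun (\<lambda>x. f x - g x)"
proof -
  have "poly_fun (\<lambda>x. f x + (-1) * g x)"
    by (intro poly_fun.intros assms)
  then show ?thesis
    by simp
qed

lemma poly_fun_sum: "finite S \<Longrightarrow> (\<And>i. i \<in> S \<Longrightarrow> poly_fun (g i)) \<Longrightarrow> poly_fun (\<lambda>x. \<Sum>i\<in>S. g i x)"
  by (induction rule: finite_induct) (auto intro: poly_fun.intros)

lemma poly_fun_power: "poly_fun f \<Longrightarrow> poly_fun (\<lambda>x. f x ^ n)"
  by (induction n) (auto intro: poly_fun.intros)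

lemma poly_fun_inner: "poly_fun (\<lambda>x. x \<bullet> v)"
  unfolding inner_real3 by (intro poly_fun.intros)

lemma poly_fun_phase: "poly_fun (\<lambda>x. phase C L x v)"
  unfolding phase_def by (intro poly_fun_sum poly_fun.intros poly_fun_power poly_fun_inner) auto

definition monomial_sum :: "(real \<times> nat \<times> nat \<times> nat) list \<Rightarrow> real^3 \<Rightarrow> real" where
  "monomial_sum ms v = (\<Sum>(r, a, b, c) \<leftarrow> ms. r * monomial3 a b c v)"

lemma monomial_sum_simps [simp]:
  "monomial_sum [] v = 0"
  "monomial_sum ((r, a, b, c) # ms) v = r * monomial3 a b c v + monomial_sum ms v"
  "monomial_sum (ms @ ns) v = monomial_sum ms v + monomial_sum ns v"
  by (simp_all add: monomial_sum_def)

lemma monomial_sum_mult: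
  "monomial_sum ms v * monomial_sum ns v
     = monomial_sum [(r * s, a + a', b + b', c + c'). (r, a, b, c) \<leftarrow> ms, (s, a', b', c') \<leftarrow> ns] v"
proof (induction ms)
  case Nil
  then show ?case
    by simp
next
  case (Cons m ms)
  obtain r a b c where m: "m = (r, a, b, c)"
    by (cases m) auto
  have "r * monomial3 a b c v * monomial_sum ns v
          = monomial_sum [(r * s, a + a', b + b', c + c'). (s, a', b', c') \<leftarrow> ns] v"
  proof (induction ns)
    case (Cons n ns)
    then show ?case
      by (cases n) (simp add: monomial3_def power_add algebra_simps)
  qed simp
  then show ?case
    using Cons by (simp add: m distrib_right)
qed

lemma poly_fun_monomial_sum: "poly_fun f \<Longrightarrow> \<exists>ms. f = monomial_sum ms"
proof (induction rule: poly_fun.induct)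
  case (poly_fun_const c)
  show ?case
    by (rule exI[of _ "[(c, 0, 0, 0)]"]) (simp add: fun_eq_iff monomial3_def)
next
  case (poly_fun_coord i)
  have "(\<lambda>x. x$i) = monomial_sum [(1, if i = 1 then 1 else 0, if i = 2 then 1 else 0, if i = 3 then 1 else 0)]"
    using exhaust_3[of i] by (auto simp: fun_eq_iff monomial3_def)
  then show ?case
    by blast
next
  case (poly_fun_add f g)
  then obtain ms ns where "f = monomial_sum ms" "g = monomial_sum ns"
    by blast
  then show ?case
    by (intro exI[of _ "ms @ ns"]) (simp add: fun_eq_iff)
next
  case (poly_fun_mult f g)
  then obtain ms ns where "f = monomial_sum ms" "g = monomial_sum ns"
    by blast
  then show ?case
    by (intro exI[of _ "[(r * s, a + a', b + b', c + c'). (r, a, b, c) \<leftarrow> ms, (s, a', b', c') \<leftarrow> ns]"])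
       (simp add: fun_eq_iff monomial_sum_mult)
qed

lemma continuous_on_monomial_sum [continuous_intros]: "continuous_on S (monomial_sum ms)"
proof (induction ms)
  case (Cons m ms)
  then show ?case
    by (cases m) (simp add: continuous_intros)
qed (simp add: continuous_intros)

lemma sph_int_monomial_sum:
  "sph_int (monomial_sum ms) = (\<Sum>(r, a, b, c) \<leftarrow> ms. r * monomial_integral a b c)"
proof (induction ms)
  case Nil
  then show ?case
    by (simp add: sph_int_angle_box)
next
  case (Cons m ms)
  obtain r a b c where m: "m = (r, a, b, c)"
    by (cases m) auto
  have "sph_int (\<lambda>v. r * monomial3 a b c v + monomial_sum ms v)
      = r * monomial_integral a b c + sph_int (monomial_sum ms)"
    by (simp add: sph_int_add continuous_intros sph_int_cmult monomial_integral_def)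
  then show ?case
    using Cons.IH by (simp add: m)
qed

definition swap_yz :: "real^3 \<Rightarrow> real^3" where
  "swap_yz v = vector [v$1, v$3, v$2]"

lemma swap_yz_nth [simp]: "swap_yz v $ 1 = v$1" "swap_yz v $ 2 = v$3" "swap_yz v $ 3 = v$2"
  by (simp_all add: swap_yz_def)

lemma sph_int_swap_yz:
  assumes "poly_fun f"
  shows "sph_int (\<lambda>x. f (swap_yz x)) = sph_int f"
proof -
  obtain ms where f: "f = monomial_sum ms"
    using poly_fun_monomial_sum[OF assms] by blast
  define ms' where "ms' = [(r, a, c, b). (r, a, b, c) \<leftarrow> ms]"
  have "(\<lambda>x. f (swap_yz x)) = monomial_sum ms'"
    unfolding f ms'_def
  proof (induction ms)
    case (Cons m ms)
    then show ?case
      by (cases m) (simp add: fun_eq_iff monomial3_def mult_ac)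
  qed (simp add: fun_eq_iff)
  moreover have "sph_int (monomial_sum ms') = sph_int (monomial_sum ms)"
    unfolding ms'_def sph_int_monomial_sum
  proof (induction ms)
    case (Cons m ms)
    then show ?case
      by (cases m) (simp add: monomial_integral_swap_yz[symmetric])
  qed simp
  ultimately show ?thesis
    by (simp add: f)
qed

definition rot_z :: "real \<Rightarrow> real^3 \<Rightarrow> real^3" where
  "rot_z a v = vector [cos a * v$1 - sin a * v$2, sin a * v$1 + cos a * v$2, v$3]"

lemma rot_z_nth [simp]:
  "rot_z a v $ 1 = cos a * v$1 - sin a * v$2"
  "rot_z a v $ 2 = sin a * v$1 + cos a * v$2"
  "rot_z a v $ 3 = v$3"
  by (simp_all add: rot_z_def)

lemma rot_z_sph_dir: "rot_z a (sph_dir t p) = sph_dir t (p + a)"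
  by (simp add: vec3_eq_iff cos_add sin_add algebra_simps)

lemma integral_shift_periodic:
  fixes h :: "real \<Rightarrow> real"
  assumes "continuous_on UNIV h" "\<And>x. h (x + P) = h x" "0 \<le> a" "a \<le> P"
  shows "integral {0..P} (\<lambda>x. h (x + a)) = integral {0..P} h"
proof -
  have int: "h integrable_on {u..v}" for u v
    by (rule integrable_continuous_interval) (rule continuous_on_subset[OF assms(1)], auto)
  have "integral {0..P} (\<lambda>x. h (x + a)) = integral {a..P+a} h"
    using integral_shift_real_ivl[where a = a and b = "P+a" and c = a and f = h] by simp
  also have "\<dots> = integral {a..P} h + integral {P..P+a} h"
    using assms(3,4) by (simp add: Henstock_Kurzweil_Integration.integral_combine int)
  also have "integral {P..P+a} h = integral {0..a} h"
    using integral_shift_real_ivl[where a = P and b = "P+a" and c = P and f = h] by (simp add: assms(2))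
  also have "integral {a..P} h + integral {0..a} h = integral {0..P} h"
    using assms(3,4) by (simp add: Henstock_Kurzweil_Integration.integral_combine int add.commute)
  finally show ?thesis .
qed

lemma sph_int_rot_z:
  assumes f: "continuous_on (sphere 0 1) f" and a: "0 \<le> a" "a \<le> 2*pi"
  shows "sph_int (\<lambda>x. f (rot_z a x)) = sph_int f"
proof -
  have inner: "integral {0..2*pi} (\<lambda>p. f (sph_dir t (p + a)) * sin t) = integral {0..2*pi} (\<lambda>p. f (sph_dir t p) * sin t)"
    for t
  proof (rule integral_shift_periodic[OF _ _ a, of "\<lambda>p. f (sph_dir t p) * sin t"])
    show "continuous_on UNIV (\<lambda>p. f (sph_dir t p) * sin t)"
      by (intro continuous_intros continuous_on_compose_sph_dir[OF f])
    show "f (sph_dir t (p + 2 * pi)) * sin t = f (sph_dir t p) * sin t" for p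
      by (simp add: sph_dir_def)
  qed
  have "sph_int (\<lambda>x. f (rot_z a x))
      = integral {0..pi} (\<lambda>t. integral {0..2*pi} (\<lambda>p. f (sph_dir t (p + a)) * sin t))"
    unfolding sph_int_angle_box rot_z_sph_dir
    by (subst integral_prod_continuous) (auto intro!: continuous_intros continuous_on_compose_sph_dir[OF f])
  also have "\<dots> = integral {0..pi} (\<lambda>t. integral {0..2*pi} (\<lambda>p. f (sph_dir t p) * sin t))"
    by (simp only: inner)
  also have "\<dots> = sph_int f"
    unfolding sph_int_angle_box
    by (subst integral_prod_continuous) (auto intro!: continuous_intros continuous_on_compose_sph_dir[OF f])
  finally show ?thesis .
qed

definition preserves_sph_int :: "(real^3 \<Rightarrow> real^3) \<Rightarrow> bool" where
  "preserves_sph_int G \<longleftrightarrow> (\<forall>f. poly_fun f \<longrightarrow> sph_int (\<lambda>x. f (G x)) = sph_int f)"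

lemma preserves_sph_int_swap_yz: "preserves_sph_int swap_yz"
  by (simp add: preserves_sph_int_def sph_int_swap_yz)

lemma preserves_sph_int_rot_z: "0 \<le> a \<Longrightarrow> a \<le> 2*pi \<Longrightarrow> preserves_sph_int (rot_z a)"
  by (simp add: preserves_sph_int_def sph_int_rot_z continuous_on_poly_fun)

lemma poly_fun_swap_yz: "poly_fun (\<lambda>x. swap_yz x $ i)"
  using exhaust_3[of i] by (auto intro: poly_fun.intros)

lemma poly_fun_rot_z: "poly_fun (\<lambda>x. rot_z a x $ i)"
  using exhaust_3[of i] by (auto intro!: poly_fun.intros poly_fun_diff)

lemma preserves_sph_int_compose:
  assumes "preserves_sph_int G" "preserves_sph_int H" "\<And>i. poly_fun (\<lambda>x. G x $ i)"
  shows "preserves_sph_int (\<lambda>x. G (H x))"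
  unfolding preserves_sph_int_def
proof safe
  fix f
  assume f: "poly_fun f"
  have "sph_int (\<lambda>x. f (G (H x))) = sph_int (\<lambda>x. f (G x))"
    using assms(2)[unfolded preserves_sph_int_def, rule_format, OF poly_fun_compose[OF assms(3) f]] .
  also have "\<dots> = sph_int f"
    using assms(1) f by (simp add: preserves_sph_int_def)
  finally show "sph_int (\<lambda>x. f (G (H x))) = sph_int f" .
qed

lemma inner_rot_z [simp]: "rot_z a x \<bullet> rot_z a y = x \<bullet> y"
proof -
  have "rot_z a x \<bullet> rot_z a y = (sin a ^ 2 + cos a ^ 2) * (x$1 * y$1 + x$2 * y$2) + x$3 * y$3"
    by (simp only: inner_real3 rot_z_nth) (simp only: power2_eq_square algebra_simps)
  then show ?thesis
    by (simp add: inner_real3)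
qed

lemma inner_swap_yz [simp]: "swap_yz x \<bullet> swap_yz y = x \<bullet> y"
  by (simp add: inner_real3)

lemma rot_z_rot_z [simp]: "rot_z a (rot_z b v) = rot_z (a + b) v"
  by (simp add: vec3_eq_iff cos_add sin_add algebra_simps)

lemma rot_z_0 [simp]: "rot_z 0 v = v"
  by (simp add: vec3_eq_iff)

lemma rot_z_2pi [simp]: "rot_z (2*pi) v = v"
  by (simp add: vec3_eq_iff)

lemma swap_yz_swap_yz [simp]: "swap_yz (swap_yz v) = v"
  by (simp add: vec3_eq_iff)

definition pole :: "real^3" where
  "pole = vector [0, 0, 1]"

lemma pole_nth [simp]: "pole $ 1 = 0" "pole $ 2 = 0" "pole $ 3 = 1"
  by (simp_all add: pole_def)

lemma pole_in_sphere [simp]: "pole \<in> sphere 0 1"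
  by (simp add: norm_real3)

lemma continuous_on_phase [continuous_intros]: "continuous_on S (\<lambda>x. phase C L x v)"
  by (rule continuous_on_poly_fun[OF poly_fun_phase])

definition mean_scattering_cosine :: "(nat \<Rightarrow> real) \<Rightarrow> nat \<Rightarrow> real" where
  "mean_scattering_cosine C L = sph_int (\<lambda>x. phase C L x pole * x$3)"

lemma sph_int_phase_pole_monomial:
  "sph_int (\<lambda>x. phase C L x pole * monomial3 a b c x) = (\<Sum>l\<le>L. C l * monomial_integral a b (c + l))"
proof -
  have "phase C L x pole * monomial3 a b c x = (\<Sum>l\<le>L. C l * monomial3 a b (c + l) x)" for x
    by (simp add: phase_def inner_real3 monomial3_def sum_distrib_left power_add mult_ac)
  then show ?thesis
    by (simp add: sph_int_sum continuous_intros sph_int_cmult monomial_integral_def)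
qed

lemma sph_int_phase_pole_inner:
  "sph_int (\<lambda>x. phase C L x pole * (x \<bullet> w)) = mean_scattering_cosine C L * w$3"
proof -
  have "phase C L x pole * (x \<bullet> w) = w$1 * (phase C L x pole * monomial3 1 0 0 x)
          + w$2 * (phase C L x pole * monomial3 0 1 0 x) + w$3 * (phase C L x pole * monomial3 0 0 1 x)" for x
    by (simp add: inner_real3 monomial3_def algebra_simps)
  then have "sph_int (\<lambda>x. phase C L x pole * (x \<bullet> w))
      = w$1 * sph_int (\<lambda>x. phase C L x pole * monomial3 1 0 0 x)
        + w$2 * sph_int (\<lambda>x. phase C L x pole * monomial3 0 1 0 x)
        + w$3 * sph_int (\<lambda>x. phase C L x pole * monomial3 0 0 1 x)"
    by (simp add: sph_int_add sph_int_cmult continuous_intros)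
  moreover have "mean_scattering_cosine C L = sph_int (\<lambda>x. phase C L x pole * monomial3 0 0 1 x)"
    by (simp add: mean_scattering_cosine_def monomial3_def)
  ultimately show ?thesis
    by (simp add: sph_int_phase_pole_monomial monomial_integral_odd)
qed

lemma sph_int_phase_inner:
  assumes "om \<in> sphere 0 1"
  shows "sph_int (\<lambda>x. phase C L x om * (x \<bullet> w)) = mean_scattering_cosine C L * (om \<bullet> w)"
proof -
  obtain t p where tp: "0 \<le> t" "t \<le> pi" "0 \<le> p" "p \<le> 2*pi" "om = sph_dir t p"
    using sph_dir_surj[OF assms] by blast
  \<comment> \<open>G is a rotation with G pole = om: the inner conjugated z-rotation tilts the pole to
    polar angle t, the outer one turns it to azimuth p. H is its inverse.\<close>
  define G where "G v = rot_z p (swap_yz (rot_z (2*pi - t) (swap_yz v)))" for v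
  define H where "H v = swap_yz (rot_z t (swap_yz (rot_z (-p) v)))" for v
  have "preserves_sph_int (\<lambda>v. rot_z (2*pi - t) (swap_yz v))"
    using tp by (intro preserves_sph_int_compose[OF preserves_sph_int_rot_z preserves_sph_int_swap_yz poly_fun_rot_z]) auto
  then have "preserves_sph_int (\<lambda>v. swap_yz (rot_z (2*pi - t) (swap_yz v)))"
    by (rule preserves_sph_int_compose[OF preserves_sph_int_swap_yz _ poly_fun_swap_yz])
  then have G: "preserves_sph_int G"
    unfolding G_def by (rule preserves_sph_int_compose[OF preserves_sph_int_rot_z[OF tp(3,4)] _ poly_fun_rot_z])
  have "poly_fun (\<lambda>x. phase C L x om * (x \<bullet> w))"
    by (intro poly_fun_mult poly_fun_phase poly_fun_inner)
  from G[unfolded preserves_sph_int_def, rule_format, OF this]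
  have "sph_int (\<lambda>x. phase C L x om * (x \<bullet> w)) = sph_int (\<lambda>x. phase C L (G x) om * (G x \<bullet> w))"
    by simp
  also have "\<dots> = sph_int (\<lambda>x. phase C L x pole * (x \<bullet> H w))"
  proof -
    have "G pole = om"
      using tp by (simp add: G_def vec3_eq_iff sin_diff cos_diff)
    moreover have "G (H w) = w"
      by (simp add: G_def H_def)
    moreover have "phase C L (G x) (G pole) * (G x \<bullet> G (H w)) = phase C L x pole * (x \<bullet> H w)" for x
      by (simp add: phase_def G_def)
    ultimately show ?thesis
      by simp
  qed
  also have "\<dots> = mean_scattering_cosine C L * (om \<bullet> w)"
  proof -
    have "(H w)$3 = om \<bullet> w"
      using tp by (simp add: H_def inner_real3 algebra_simps)
    then show ?thesis
      by (simp add: sph_int_phase_pole_inner)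
  qed
  finally show ?thesis .
qed

section \<open>Maximum principle for the scattering operator\<close>

lemma box_Pair_iff [iff]: "(x, y) \<in> box (a, c) (b, d) \<longleftrightarrow> x \<in> box a b \<and> y \<in> box c d"
  by (auto simp: mem_box Basis_prod_def ball_Un)

lemma box_angle_nonempty: "box (0, 0) (pi, 2 * pi) \<noteq> {}"
proof -
  have "(pi/2, pi) \<in> box (0, 0) (pi, 2 * pi)"
    by simp
  then show ?thesis
    by blast
qed

lemma cos_sin_comb_eq_0:
  fixes a b q h :: real
  assumes h: "0 < h" "h < pi"
    and plus: "a * cos (q + h) + b * sin (q + h) = a * cos q + b * sin q"
    and minus: "a * cos (q - h) + b * sin (q - h) = a * cos q + b * sin q"
  shows "a = 0 \<and> b = 0"
proof -
  define X where "X = a * cos q + b * sin q"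
  define Y where "Y = b * cos q - a * sin q"
  have "a * cos (q + h) + b * sin (q + h) - (a * cos (q - h) + b * sin (q - h)) = 2 * sin h * Y"
    unfolding Y_def cos_add sin_add cos_diff sin_diff by (simp add: algebra_simps)
  moreover have "sin h > 0"
    using h by (intro sin_gt_zero) auto
  ultimately have Y: "Y = 0"
    using plus minus by simp
  have "a * cos (q + h) + b * sin (q + h) + (a * cos (q - h) + b * sin (q - h)) - 2 * X = 2 * (cos h - 1) * X"
    unfolding X_def cos_add sin_add cos_diff sin_diff by (simp add: algebra_simps)
  moreover have "cos h < 1"
    using h cos_monotone_0_pi[of 0 h] by simp
  ultimately have X: "X = 0"
    using plus minus by (simp add: X_def)
  have "X * cos q - Y * sin q = a * (sin q ^ 2 + cos q ^ 2)" "X * sin q + Y * cos q = b * (sin q ^ 2 + cos q ^ 2)"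
    unfolding X_def Y_def by (simp_all only: power2_eq_square algebra_simps)
  then show ?thesis
    using X Y by simp
qed

lemma sph_dir_inner_const_on_ball_imp_0:
  assumes r: "0 < r" "ball x r \<subseteq> box (0, 0) (pi, 2 * pi)"
    and const: "\<And>y. y \<in> ball x r \<Longrightarrow> sph_dir (fst y) (snd y) \<bullet> w = k"
  shows "w = 0"
proof -
  obtain t p where x: "x = (t, p)"
    by (cases x)
  define h where "h = min (r/2) 1"
  have h: "0 < h" "h < r" "h < pi"
    using r pi_gt3 by (auto simp: h_def)
  have near: "(t, p + h) \<in> ball x r" "(t, p - h) \<in> ball x r" "(t + h, p) \<in> ball x r" "(t, p) \<in> ball x r"
    using h by (auto simp: x dist_Pair_Pair dist_real_def)
  then have "0 < t" "t + h < pi"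
    using r(2) by (auto simp: x)
  then have "sin t > 0" "cos (t + h) < cos t"
    using h by (auto intro!: sin_gt_zero cos_monotone_0_pi)
  have T: "sph_dir t' p' \<bullet> w = sin t' * (w$1 * cos p' + w$2 * sin p') + cos t' * w$3" for t' p'
    by (simp add: inner_real3 algebra_simps)
  have "sin t * (w$1 * cos (p + h) + w$2 * sin (p + h)) = sin t * (w$1 * cos p + w$2 * sin p)"
    using const[OF near(1)] const[OF near(4)] unfolding T fst_conv snd_conv by linarith
  moreover have "sin t * (w$1 * cos (p - h) + w$2 * sin (p - h)) = sin t * (w$1 * cos p + w$2 * sin p)"
    using const[OF near(2)] const[OF near(4)] unfolding T fst_conv snd_conv by linarith
  ultimately have "w$1 * cos (p + h) + w$2 * sin (p + h) = w$1 * cos p + w$2 * sin p"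
       "w$1 * cos (p - h) + w$2 * sin (p - h) = w$1 * cos p + w$2 * sin p"
    using \<open>sin t > 0\<close> by simp_all
  then have "w$1 = 0 \<and> w$2 = 0"
    using cos_sin_comb_eq_0 h by blast
  moreover have "cos (t + h) * w$3 = cos t * w$3"
    using const[OF near(3)] const[OF near(4)] calculation by (simp add: T)
  ultimately show ?thesis
    using \<open>cos (t + h) < cos t\<close> by (simp add: vec3_eq_iff)
qed

lemma poly_inner_sph_dir_nonzero:
  fixes Q :: "real poly"
  assumes "Q \<noteq> 0" "w \<noteq> 0" "open V" "V \<inter> angle_box \<noteq> {}"
  obtains x where "x \<in> V" "x \<in> box (0, 0) (pi, 2 * pi)" "poly Q (sph_dir (fst x) (snd x) \<bullet> w) \<noteq> 0"
proof -
  have "V \<inter> box (0, 0) (pi, 2 * pi) \<noteq> {}"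
    using assms(3,4) open_Int_closure_eq_empty[of V "box (0, 0) (pi, 2 * pi)"]
    by (simp add: closure_box[OF box_angle_nonempty])
  then obtain x0 where "x0 \<in> V \<inter> box (0, 0) (pi, 2 * pi)"
    by blast
  then obtain r where r: "0 < r" "ball x0 r \<subseteq> V \<inter> box (0, 0) (pi, 2 * pi)"
    using assms(3) by (meson open_Int open_box openE)
  define T where "T y = sph_dir (fst y) (snd y) \<bullet> w" for y
  show ?thesis
  proof (rule ccontr)
    assume "\<not> ?thesis"
    then have "\<forall>y\<in>ball x0 r. poly Q (T y) = 0"
      using r that unfolding T_def by blast
    then have "T ` ball x0 r \<subseteq> {z. poly Q z = 0}"
      by auto
    then have "finite (T ` ball x0 r)"
      using poly_roots_finite[OF assms(1)] by (rule finite_subset)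
    moreover have "continuous_on (ball x0 r) T"
      unfolding T_def by (intro continuous_intros)
    ultimately have "T constant_on ball x0 r"
      by (intro continuous_finite_range_constant) auto
    then obtain k where "\<And>y. y \<in> ball x0 r \<Longrightarrow> T y = k"
      unfolding constant_on_def by blast
    then have "w = 0"
      using r by (intro sph_dir_inner_const_on_ball_imp_0[of r x0]) (auto simp: T_def)
    then show False
      using assms(2) by simp
  qed
qed

lemma sph_int_nonneg_eq_0:
  assumes "continuous_on (sphere 0 1) g" "\<And>y. y \<in> sphere 0 1 \<Longrightarrow> 0 \<le> g y" "sph_int g = 0"
    and x: "x \<in> box (0, 0) (pi, 2 * pi)"
  shows "g (sph_dir (fst x) (snd x)) = 0"
proof -
  have "\<forall>y\<in>angle_box. g (sph_dir (fst y) (snd y)) * sin (fst y) = 0"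
  proof (subst integral_cbox_eq_0_iff[symmetric])
    show "continuous_on angle_box (\<lambda>y. g (sph_dir (fst y) (snd y)) * sin (fst y))"
      by (rule continuous_on_sph_integrand[OF assms(1)])
    show "0 \<le> g (sph_dir (fst y) (snd y)) * sin (fst y)" if "y \<in> angle_box" for y
      using that assms(2) by (cases y) (auto intro!: mult_nonneg_nonneg sin_ge_zero)
  qed (use assms(3) box_angle_nonempty in \<open>simp_all add: sph_int_angle_box\<close>)
  moreover have "x \<in> angle_box"
    using x box_subset_cbox by blast
  moreover have "sin (fst x) > 0"
    using x by (cases x) (auto intro!: sin_gt_zero)
  ultimately show ?thesis
    by auto
qed

lemma phase_eq_poly: "phase C L x v = poly (\<Sum>l\<le>L. monom (C l) l) (x \<bullet> v)"
  by (simp add: phase_def poly_sum poly_monom)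

lemma scattering_fixed_point_const:
  assumes p_nonneg: "\<forall>\<Omega>\<in>sphere 0 1. \<forall>\<Omega>'\<in>sphere 0 1. phase C L \<Omega>' \<Omega> \<ge> 0"
    and p_norm: "\<forall>\<Omega>\<in>sphere 0 1. sph_int (\<lambda>\<Omega>'. phase C L \<Omega>' \<Omega>) = 1"
    and f: "continuous_on (sphere 0 1) f"
    and fixed: "\<forall>\<Omega>\<in>sphere 0 1. f \<Omega> = source C L f \<Omega>"
  obtains k where "\<And>\<Omega>. \<Omega> \<in> sphere 0 1 \<Longrightarrow> f \<Omega> = k"
proof -
  obtain o0 where o0: "o0 \<in> sphere 0 1" and max: "\<And>y. y \<in> sphere 0 1 \<Longrightarrow> f y \<le> f o0"
    using continuous_attains_sup[OF compact_sphere _ f] pole_in_sphere by blast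
  define M where "M = f o0"
  have "sph_int (\<lambda>y. phase C L y o0 * (M - f y))
      = sph_int (\<lambda>y. M * phase C L y o0 - phase C L y o0 * f y)"
    by (simp add: algebra_simps)
  also have "\<dots> = M * sph_int (\<lambda>y. phase C L y o0) - sph_int (\<lambda>y. phase C L y o0 * f y)"
    by (subst sph_int_diff) (auto intro!: continuous_intros f simp: sph_int_cmult)
  also have "\<dots> = 0"
    using p_norm fixed o0 by (simp add: M_def source_def)
  finally have int0: "sph_int (\<lambda>y. phase C L y o0 * (M - f y)) = 0" .
  \<comment> \<open>The kernel at the maximum point o0 must annihilate M - f; its zero set has empty
    interior, so f = M throughout.\<close>
  have vanish: "phase C L (sph_dir (fst x) (snd x)) o0 * (M - f (sph_dir (fst x) (snd x))) = 0"
    if "x \<in> box (0, 0) (pi, 2 * pi)" for x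
    using p_nonneg o0 max
    by (intro sph_int_nonneg_eq_0[OF _ _ int0 that]) (auto intro!: continuous_intros f simp: M_def)
  define Q where "Q = (\<Sum>l\<le>L. monom (C l) l)"
  have "Q \<noteq> 0"
  proof
    assume "Q = 0"
    then have "sph_int (\<lambda>y. phase C L y o0) = 0"
      by (simp add: phase_eq_poly flip: Q_def) (simp add: sph_int_angle_box)
    then show False
      using p_norm o0 by simp
  qed
  have "f y = M" if y: "y \<in> sphere 0 1" for y
  proof (rule ccontr)
    assume "f y \<noteq> M"
    then have "f y < M"
      using max[OF y] by (simp add: M_def)
    obtain t p where "(t, p) \<in> angle_box" "y = sph_dir t p"
      using sph_dir_surj[OF y] by (metis cbox_Pair_iff mem_box_real(2))
    define V where "V = {x. f (sph_dir (fst x) (snd x)) < M}"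
    have "open V"
      unfolding V_def by (intro open_Collect_less continuous_on_compose_sph_dir[OF f] continuous_intros)
    moreover have "(t, p) \<in> V \<inter> angle_box"
      using \<open>(t, p) \<in> angle_box\<close> \<open>y = sph_dir t p\<close> \<open>f y < M\<close> by (simp add: V_def)
    then have "V \<inter> angle_box \<noteq> {}"
      by blast
    moreover have "o0 \<noteq> 0"
      using o0 by auto
    ultimately obtain x where x: "x \<in> V" "x \<in> box (0, 0) (pi, 2 * pi)"
        and "poly Q (sph_dir (fst x) (snd x) \<bullet> o0) \<noteq> 0"
      using poly_inner_sph_dir_nonzero[OF \<open>Q \<noteq> 0\<close>] by blast
    then have "phase C L (sph_dir (fst x) (snd x)) o0 \<noteq> 0" "M - f (sph_dir (fst x) (snd x)) \<noteq> 0"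
      by (simp_all add: V_def Q_def phase_eq_poly)
    then show False
      using vanish[OF x(2)] by simp
  qed
  then show ?thesis
    using that by blast
qed

lemma mean_scattering_cosine_ne_1:
  assumes p_nonneg: "\<forall>\<Omega>\<in>sphere 0 1. \<forall>\<Omega>'\<in>sphere 0 1. phase C L \<Omega>' \<Omega> \<ge> 0"
    and p_norm: "\<forall>\<Omega>\<in>sphere 0 1. sph_int (\<lambda>\<Omega>'. phase C L \<Omega>' \<Omega>) = 1"
  shows "mean_scattering_cosine C L \<noteq> 1"
proof
  assume g: "mean_scattering_cosine C L = 1"
  have fixed: "\<forall>\<Omega>\<in>sphere 0 1. \<Omega>$3 = source C L (\<lambda>v. v$3) \<Omega>"
  proof
    fix \<Omega> :: "real^3"
    assume "\<Omega> \<in> sphere 0 1"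
    then have "sph_int (\<lambda>x. phase C L x \<Omega> * (x \<bullet> pole)) = mean_scattering_cosine C L * (\<Omega> \<bullet> pole)"
      by (rule sph_int_phase_inner)
    then show "\<Omega>$3 = source C L (\<lambda>v. v$3) \<Omega>"
      using g by (simp add: source_def inner_real3)
  qed
  have "continuous_on (sphere 0 1) (\<lambda>v::real^3. v$3)"
    by (intro continuous_intros)
  then obtain k where "\<And>\<Omega>::real^3. \<Omega> \<in> sphere 0 1 \<Longrightarrow> \<Omega>$3 = k"
    using scattering_fixed_point_const[OF p_nonneg p_norm _ fixed] by blast
  from this[of pole] this[of "- pole"] show False
    using pole_in_sphere by simp
qed

section \<open>The first-order asymptotic solution\<close>

lemma scattering_linear_forcing_solution:
  assumes p_nonneg: "\<forall>\<Omega>\<in>sphere 0 1. \<forall>\<Omega>'\<in>sphere 0 1. phase C L \<Omega>' \<Omega> \<ge> 0"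
    and p_norm: "\<forall>\<Omega>\<in>sphere 0 1. sph_int (\<lambda>\<Omega>'. phase C L \<Omega>' \<Omega>) = 1"
    and u: "continuous_on (sphere 0 1) u"
    and forced: "\<And>\<Omega>. \<Omega> \<in> sphere 0 1 \<Longrightarrow> u \<Omega> = source C L u \<Omega> + \<Omega> \<bullet> b"
  obtains a where "\<And>\<Omega>. \<Omega> \<in> sphere 0 1 \<Longrightarrow> u \<Omega> = a + (\<Omega> \<bullet> b) / (1 - mean_scattering_cosine C L)"
proof -
  define g where "g = mean_scattering_cosine C L"
  have "g \<noteq> 1"
    using mean_scattering_cosine_ne_1[OF p_nonneg p_norm] by (simp add: g_def)
  define v where "v \<Omega> = u \<Omega> - (\<Omega> \<bullet> b) / (1 - g)" for \<Omega>
  have "\<forall>\<Omega>\<in>sphere 0 1. v \<Omega> = source C L v \<Omega>"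
  proof
    fix \<Omega> :: "real^3"
    assume \<Omega>: "\<Omega> \<in> sphere 0 1"
    have "source C L v \<Omega> = sph_int (\<lambda>x. phase C L x \<Omega> * u x - 1 / (1 - g) * (phase C L x \<Omega> * (x \<bullet> b)))"
      unfolding source_def v_def by (simp add: algebra_simps)
    also have "\<dots> = source C L u \<Omega> - 1 / (1 - g) * sph_int (\<lambda>x. phase C L x \<Omega> * (x \<bullet> b))"
      unfolding source_def by (subst sph_int_diff) (intro continuous_intros u, intro continuous_intros, simp only: sph_int_cmult)
    also have "\<dots> = source C L u \<Omega> - 1 / (1 - g) * (g * (\<Omega> \<bullet> b))"
      by (simp only: sph_int_phase_inner[OF \<Omega>] g_def)
    also have "\<dots> = v \<Omega>"
      using forced[OF \<Omega>] \<open>g \<noteq> 1\<close> by (simp add: v_def field_simps)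
    finally show "v \<Omega> = source C L v \<Omega>" ..
  qed
  moreover have "continuous_on (sphere 0 1) v"
    unfolding v_def using \<open>g \<noteq> 1\<close> by (intro continuous_intros u) auto
  ultimately obtain a where "\<And>\<Omega>. \<Omega> \<in> sphere 0 1 \<Longrightarrow> v \<Omega> = a"
    using scattering_fixed_point_const[OF p_nonneg p_norm] by blast
  then show ?thesis
    using that[of a] by (simp add: v_def g_def diff_eq_eq)
qed

lemma zeroth_order_isotropic:
  assumes p_nonneg: "\<forall>\<Omega>\<in>sphere 0 1. \<forall>\<Omega>'\<in>sphere 0 1. phase C L \<Omega>' \<Omega> \<ge> 0"
    and p_norm: "\<forall>\<Omega>\<in>sphere 0 1. sph_int (\<lambda>\<Omega>'. phase C L \<Omega>' \<Omega>) = 1"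
    and cont0: "\<forall>y. continuous_on (sphere 0 1) (I0 y)"
    and order0: "\<forall>y. \<forall>\<Omega>\<in>sphere 0 1. I0 y \<Omega> = source C L (I0 y) \<Omega>"
  shows "\<Omega> \<in> sphere 0 1 \<Longrightarrow> I0 y \<Omega> = I0 y pole"
  using scattering_fixed_point_const[OF p_nonneg p_norm cont0[THEN spec] order0[THEN spec]]
  by (metis pole_in_sphere)

lemma first_order_forcing:
  assumes p_norm: "\<forall>\<Omega>\<in>sphere 0 1. sph_int (\<lambda>\<Omega>'. phase C L \<Omega>' \<Omega>) = 1"
    and iso: "\<And>y \<Omega>. \<Omega> \<in> sphere 0 1 \<Longrightarrow> I0 y \<Omega> = \<phi> y"
    and order1: "\<forall>y. \<forall>\<Omega>\<in>sphere 0 1. \<exists>D.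
                   ((\<lambda>z. source C L (I0 z) \<Omega>) has_derivative D) (at y) \<and>
                   I1 y \<Omega> = source C L (I1 y) \<Omega> - D \<Omega> / \<sigma>s"
  obtains b where "\<And>\<Omega>. \<Omega> \<in> sphere 0 1 \<Longrightarrow> I1 x \<Omega> = source C L (I1 x) \<Omega> + \<Omega> \<bullet> b"
proof -
  have source0: "(\<lambda>z. source C L (I0 z) \<Omega>) = \<phi>" if \<Omega>: "\<Omega> \<in> sphere 0 1" for \<Omega>
  proof
    fix z
    have "source C L (I0 z) \<Omega> = sph_int (\<lambda>x. \<phi> z * phase C L x \<Omega>)"
      unfolding source_def by (rule sph_int_cong) (simp add: iso)
    then show "source C L (I0 z) \<Omega> = \<phi> z"
      using p_norm \<Omega> by (simp add: sph_int_cmult)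
  qed
  obtain D where D: "(\<phi> has_derivative D) (at x)"
    using order1 pole_in_sphere source0[OF pole_in_sphere] by metis
  define b where "b = - (1 / \<sigma>s) *\<^sub>R adjoint D 1"
  have "D \<Omega> = \<Omega> \<bullet> adjoint D 1" for \<Omega>
    using adjoint_works[OF has_derivative_linear[OF D], of \<Omega> 1] by simp
  then have D_b: "- D \<Omega> / \<sigma>s = \<Omega> \<bullet> b" for \<Omega>
    by (simp add: b_def)
  show ?thesis
  proof (rule that)
    fix \<Omega> :: "real^3"
    assume \<Omega>: "\<Omega> \<in> sphere 0 1"
    then obtain D' where "(\<phi> has_derivative D') (at x)" "I1 x \<Omega> = source C L (I1 x) \<Omega> - D' \<Omega> / \<sigma>s"
      using order1 source0[OF \<Omega>] by metis
    moreover have "D' = D"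
      using calculation(1) D by (rule has_derivative_unique)
    ultimately show "I1 x \<Omega> = source C L (I1 x) \<Omega> + \<Omega> \<bullet> b"
      using D_b[of \<Omega>] by simp
  qed
qed

lemma moment_affine:
  assumes "Omega_prod idx = monomial3 a b c"
    and "\<And>\<Omega>. \<Omega> \<in> sphere 0 1 \<Longrightarrow> f \<Omega> = A + \<Omega> \<bullet> B"
  shows "moment idx f = A * monomial_integral a b c + B$1 * monomial_integral (a+1) b c
           + B$2 * monomial_integral a (b+1) c + B$3 * monomial_integral a b (c+1)"
proof -
  have "moment idx f = sph_int (monomial_sum [(A, a, b, c), (B$1, a+1, b, c), (B$2, a, b+1, c), (B$3, a, b, c+1)])"
    unfolding moment_def
    by (rule sph_int_cong) (simp add: assms inner_real3 monomial3_def algebra_simps)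
  then show ?thesis
    by (simp add: sph_int_monomial_sum add.assoc)
qed

lemma sph_int_coord_Omega_prod:
  assumes "Omega_prod idx = monomial3 a b c"
  shows "sph_int (\<lambda>\<Omega>. \<Omega>$1 * Omega_prod idx \<Omega>) = monomial_integral (a+1) b c"
    and "sph_int (\<lambda>\<Omega>. \<Omega>$2 * Omega_prod idx \<Omega>) = monomial_integral a (b+1) c"
    and "sph_int (\<lambda>\<Omega>. \<Omega>$3 * Omega_prod idx \<Omega>) = monomial_integral a b (c+1)"
  unfolding assms monomial_integral_def monomial3_def by (simp_all add: mult_ac)

lemma odd_moments_of_affine:
  assumes affine: "\<And>\<Omega>. \<Omega> \<in> sphere 0 1 \<Longrightarrow> f \<Omega> = A + \<Omega> \<bullet> B"
  shows
   "(odd (count_list idx 1) \<and> even (count_list idx 2) \<and> even (count_list idx 3) \<longrightarrow>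
       moment idx f = sph_int (\<lambda>\<Omega>. \<Omega>$1 * Omega_prod idx \<Omega>) / sph_int (\<lambda>\<Omega>. (\<Omega>$1)^2) * moment [1] f)
  \<and> (even (count_list idx 1) \<and> odd (count_list idx 2) \<and> even (count_list idx 3) \<longrightarrow>
       moment idx f = sph_int (\<lambda>\<Omega>. \<Omega>$2 * Omega_prod idx \<Omega>) / sph_int (\<lambda>\<Omega>. (\<Omega>$1)^2) * moment [2] f)
  \<and> (even (count_list idx 1) \<and> even (count_list idx 2) \<and> odd (count_list idx 3) \<longrightarrow>
       moment idx f = sph_int (\<lambda>\<Omega>. \<Omega>$3 * Omega_prod idx \<Omega>) / sph_int (\<lambda>\<Omega>. (\<Omega>$1)^2) * moment [3] f)
  \<and> (odd (count_list idx 1) \<and> odd (count_list idx 2) \<and> odd (count_list idx 3) \<longrightarrow>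
       moment idx f = 0)"
proof -
  have Omega_prod: "Omega_prod idx = monomial3 (count_list idx 1) (count_list idx 2) (count_list idx 3)"
    "Omega_prod [1] = monomial3 1 0 0" "Omega_prod [2] = monomial3 0 1 0" "Omega_prod [3] = monomial3 0 0 1"
    by (simp_all add: Omega_prod_eq_monomial3)
  have den: "sph_int (\<lambda>\<Omega>. (\<Omega>$1)^2) = 4 * pi / 3"
    using monomial_integral_square(1) unfolding monomial_integral_def monomial3_def by simp
  have J_coord: "moment [1] f = B$1 * (4 * pi / 3)" "moment [2] f = B$2 * (4 * pi / 3)"
    "moment [3] f = B$3 * (4 * pi / 3)"
    using moment_affine[OF Omega_prod(2) affine] moment_affine[OF Omega_prod(3) affine]
      moment_affine[OF Omega_prod(4) affine]
    by (simp_all add: monomial_integral_odd monomial_integral_square[unfolded numeral_2_eq_2])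
  have J: "moment idx f = A * monomial_integral (count_list idx 1) (count_list idx 2) (count_list idx 3)
     + B$1 * monomial_integral (count_list idx 1 + 1) (count_list idx 2) (count_list idx 3)
     + B$2 * monomial_integral (count_list idx 1) (count_list idx 2 + 1) (count_list idx 3)
     + B$3 * monomial_integral (count_list idx 1) (count_list idx 2) (count_list idx 3 + 1)"
    by (rule moment_affine[OF Omega_prod(1) affine])
  show ?thesis
    unfolding J J_coord sph_int_coord_Omega_prod[OF Omega_prod(1)] den
    by (simp add: monomial_integral_odd)
qed

theorem lemma3:
  fixes C :: "nat \<Rightarrow> real" and L :: nat and \<sigma>s :: real and \<epsilon> :: real
    and I0 I1 :: "real^3 \<Rightarrow> real^3 \<Rightarrow> real"
    and x :: "real^3" and idx :: "3 list"
  assumes sigma_pos: "\<sigma>s > 0"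
    and p_nonneg: "\<forall>\<Omega>\<in>sphere 0 1. \<forall>\<Omega>'\<in>sphere 0 1. phase C L \<Omega>' \<Omega> \<ge> 0"
    and p_norm: "\<forall>\<Omega>\<in>sphere 0 1. sph_int (\<lambda>\<Omega>'. phase C L \<Omega>' \<Omega>) = 1"
    and cont0: "\<forall>y. continuous_on (sphere 0 1) (I0 y)"
    and cont1: "\<forall>y. continuous_on (sphere 0 1) (I1 y)"
    and order0: "\<forall>y. \<forall>\<Omega>\<in>sphere 0 1. I0 y \<Omega> = source C L (I0 y) \<Omega>"
    and order1: "\<forall>y. \<forall>\<Omega>\<in>sphere 0 1. \<exists>D.
                   ((\<lambda>z. source C L (I0 z) \<Omega>) has_derivative D) (at y) \<and>
                   I1 y \<Omega> = source C L (I1 y) \<Omega> - D \<Omega> / \<sigma>s"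
    and l_odd: "odd (length idx)"
  defines "J \<equiv> \<lambda>js. moment js (\<lambda>\<Omega>. I0 x \<Omega> + \<epsilon> * I1 x \<Omega>)"
  shows
   "(odd (count_list idx 1) \<and> even (count_list idx 2) \<and> even (count_list idx 3) \<longrightarrow>
       J idx = sph_int (\<lambda>\<Omega>. \<Omega>$1 * Omega_prod idx \<Omega>) / sph_int (\<lambda>\<Omega>. (\<Omega>$1)^2) * J [1])
  \<and> (even (count_list idx 1) \<and> odd (count_list idx 2) \<and> even (count_list idx 3) \<longrightarrow>
       J idx = sph_int (\<lambda>\<Omega>. \<Omega>$2 * Omega_prod idx \<Omega>) / sph_int (\<lambda>\<Omega>. (\<Omega>$1)^2) * J [2])
  \<and> (even (count_list idx 1) \<and> even (count_list idx 2) \<and> odd (count_list idx 3) \<longrightarrow>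
       J idx = sph_int (\<lambda>\<Omega>. \<Omega>$3 * Omega_prod idx \<Omega>) / sph_int (\<lambda>\<Omega>. (\<Omega>$1)^2) * J [3])
  \<and> (odd (count_list idx 1) \<and> odd (count_list idx 2) \<and> odd (count_list idx 3) \<longrightarrow>
       J idx = 0)"
proof -
  have iso: "\<And>y \<Omega>. \<Omega> \<in> sphere 0 1 \<Longrightarrow> I0 y \<Omega> = I0 y pole"
    by (rule zeroth_order_isotropic[OF p_nonneg p_norm cont0 order0])
  obtain b where forced: "\<And>\<Omega>. \<Omega> \<in> sphere 0 1 \<Longrightarrow> I1 x \<Omega> = source C L (I1 x) \<Omega> + \<Omega> \<bullet> b"
    using first_order_forcing[OF p_norm iso order1] by blast
  obtain a where "\<And>\<Omega>. \<Omega> \<in> sphere 0 1 \<Longrightarrow> I1 x \<Omega> = a + (\<Omega> \<bullet> b) / (1 - mean_scattering_cosine C L)"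
    using scattering_linear_forcing_solution[OF p_nonneg p_norm cont1[THEN spec] forced] by blast
  then have "I0 x \<Omega> + \<epsilon> * I1 x \<Omega>
      = (I0 x pole + \<epsilon> * a) + \<Omega> \<bullet> ((\<epsilon> / (1 - mean_scattering_cosine C L)) *\<^sub>R b)"
    if "\<Omega> \<in> sphere 0 1" for \<Omega>
    using iso that by (simp add: algebra_simps)
  then show ?thesis
    unfolding J_def by (rule odd_moments_of_affine)
qed

end
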